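(* For integers $j,k,n\ge 0$ let $$a_n(j,k)=\binom{n}{j}^2\binom{n}{k}^2\binom{n+j}{n}\binom{n+k}{n}\binom{j+k}{n}.$$ Then for all integers $n\ge 1$ and $j,k\ge 0$: (a) $v_2\big(a_n(j,k)\big)=1$ if and only if $\{j,k\}=\{0,n\}$ and $n$ is a power of $2$; (b) $v_2\big(a_n(j,k)\big)\ge 2$ otherwise.
   Context: $v_2$ denotes the $2$-adic valuation on the integers, with the convention $v_2(0)=+\infty$. Binomial coefficients $\binom{a}{b}$ with $b>a\ge 0$ are $0$. "Power of $2$" means $2^m$ for some integer $m\ge 0$ (so $n=1$ is included). *)

theory Defs
  imports Main "HOL-Library.Extended_Nat" "HOL-Computational_Algebra.Primes"
begin

definition v2 :: "nat \<Rightarrow> enat" where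
  "v2 m = (if m = 0 then \<infinity> else enat (multiplicity (2::nat) m))"

definition a :: "nat \<Rightarrow> nat \<Rightarrow> nat \<Rightarrow> nat" where
  "a n j k = (n choose j)^2 * (n choose k)^2 * ((n + j) choose n) * ((n + k) choose n)
             * ((j + k) choose n)"

end

theory Submission
  imports Defs
begin

text \<open>
  Write \<open>s(n)\<close> for the binary digit sum of \<open>n\<close>. By Legendre, \<open>v\<^sub>2(m!) = m - s(m)\<close>, hence
  Kummer's \<open>v\<^sub>2 (x+y choose x) = s(x) + s(y) - s(x+y)\<close>. For \<open>{j,k} = {0,n}\<close> the product
  collapses to \<open>(2n choose n)\<close>, whose valuation is \<open>s(n) \<ge> 1\<close>, with equality exactly for
  powers of 2. Otherwise \<open>1 \<le> j, k \<le> n\<close> (or \<open>a = 0\<close>), and each pair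
  \<open>(n choose j)\<^sup>2 (n+j choose n)\<close> is even: if \<open>(n choose j)\<close> is odd then \<open>s(n) = s(j) + s(n-j)\<close>,
  so \<open>s(n+j) \<le> s(2j) + s(n-j) = s(n)\<close> and \<open>v\<^sub>2 (n+j choose n) \<ge> s(j) \<ge> 1\<close>.
\<close>

fun bitsum :: "nat \<Rightarrow> nat" where
  "bitsum n = (if n = 0 then 0 else n mod 2 + bitsum (n div 2))"

declare bitsum.simps [simp del]

lemma bitsum_0 [simp]: "bitsum 0 = 0"
  by (simp add: bitsum.simps)

lemma bitsum_double [simp]: "bitsum (2 * n) = bitsum n"
  by (cases "n = 0") (simp_all add: bitsum.simps [of "2 * n"])

lemma bitsum_Suc_double [simp]: "bitsum (Suc (2 * n)) = Suc (bitsum n)"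
  by (simp add: bitsum.simps [of "Suc (2 * n)"])

lemma bitsum_induct [case_names zero double Suc_double]:
  assumes "P 0" "\<And>n. n > 0 \<Longrightarrow> P n \<Longrightarrow> P (2 * n)" "\<And>n. P n \<Longrightarrow> P (Suc (2 * n))"
  shows "P n"
proof (induction n rule: less_induct)
  case (less n)
  consider "n = 0" | q where "q > 0" "n = 2 * q" | q where "n = Suc (2 * q)"
    by (metis evenE oddE Suc_eq_plus1 gr0I mult_0_right)
  then show ?case
    by cases (use assms less.IH in auto)
qed

lemma bitsum_eq_0_iff [simp]: "bitsum n = 0 \<longleftrightarrow> n = 0"
  by (induction n rule: bitsum_induct) simp_all

lemma bitsum_pos_iff [simp]: "bitsum n > 0 \<longleftrightarrow> n > 0"
  unfolding neq0_conv [symmetric] by simp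

lemma bitsum_eq_1_iff: "bitsum n = 1 \<longleftrightarrow> (\<exists>m. n = 2 ^ m)"
proof
  show "bitsum n = 1 \<Longrightarrow> \<exists>m. n = 2 ^ m"
  proof (induction n rule: bitsum_induct)
    case (double n)
    then have "\<exists>m. n = 2 ^ m" by simp
    then obtain m where "n = 2 ^ m" ..
    then have "2 * n = 2 ^ Suc m" by simp
    then show ?case by blast
  next
    case (Suc_double n)
    then have "n = 0" by simp
    then have "Suc (2 * n) = 2 ^ 0" by simp
    then show ?case by blast
  qed simp
  have "bitsum (2 ^ m) = 1" for m
    using bitsum_Suc_double [of 0] by (induction m) simp_all
  then show "\<exists>m. n = 2 ^ m \<Longrightarrow> bitsum n = 1" by blast
qed

lemma multiplicity_two_double:
  "n > 0 \<Longrightarrow> multiplicity (2::nat) (2 * n) = Suc (multiplicity 2 n)"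
  by (rule multiplicity_times_same) simp_all

text \<open>Adding 1 turns the \<open>v\<^sub>2(m+1)\<close> trailing ones of \<open>m\<close> into zeros and the next zero into a one.\<close>

lemma bitsum_Suc: "bitsum (Suc m) + multiplicity (2::nat) (Suc m) = Suc (bitsum m)"
proof (induction m rule: bitsum_induct)
  case zero
  show ?case using bitsum_Suc_double [of 0] by simp
next
  case (double n)
  have "\<not> (2::nat) dvd Suc (2 * n)" by simp
  then show ?case by (simp add: not_dvd_imp_multiplicity_0)
next
  case (Suc_double n)
  have "Suc (Suc (2 * n)) = 2 * Suc n" by simp
  then show ?case
    using Suc_double by (simp only: bitsum_double multiplicity_two_double zero_less_Suc) simp
qed

lemma multiplicity_two_fact: "multiplicity (2::nat) (fact m) + bitsum m = m"
proof (induction m)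
  case (Suc m)
  have "multiplicity (2::nat) (fact (Suc m)) = multiplicity 2 (Suc m) + multiplicity 2 (fact m :: nat)"
    unfolding fact_Suc of_nat_id by (rule prime_elem_multiplicity_mult_distrib) simp_all
  then show ?case using Suc bitsum_Suc [of m] by simp
qed simp

lemma multiplicity_two_choose:
  "multiplicity (2::nat) ((x + y) choose x) + bitsum (x + y) = bitsum x + bitsum y"
proof -
  have "fact (x + y) = (fact x * fact y * ((x + y) choose x) :: nat)"
    using binomial_fact_lemma [of x "x + y"] by simp
  then have "multiplicity (2::nat) (fact (x + y))
      = multiplicity 2 (fact x :: nat) + multiplicity 2 (fact y :: nat) + multiplicity 2 ((x + y) choose x)"
    by (simp add: prime_elem_multiplicity_mult_distrib)
  then show ?thesis
    using multiplicity_two_fact [of x] multiplicity_two_fact [of y] multiplicity_two_fact [of "x + y"]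
    by linarith
qed

lemma bitsum_add_le: "bitsum (x + y) \<le> bitsum x + bitsum y"
  using multiplicity_two_choose [of x y] by linarith

lemma multiplicity_two_central_binomial: "multiplicity (2::nat) ((n + n) choose n) = bitsum n"
  using multiplicity_two_choose [of n n] bitsum_double [of n] by (simp add: mult_2)

lemma even_choose_add_if_odd_choose:
  assumes "0 < j" "j \<le> n" "multiplicity (2::nat) (n choose j) = 0"
  shows "multiplicity (2::nat) ((n + j) choose n) > 0"
proof -
  have "bitsum n = bitsum j + bitsum (n - j)"
    using multiplicity_two_choose [of j "n - j"] assms by simp
  moreover have "n + j = 2 * j + (n - j)" using assms by simp
  then have "bitsum (n + j) \<le> bitsum j + bitsum (n - j)"
    using bitsum_add_le [of "2 * j" "n - j"] by (simp only: bitsum_double)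
  moreover have "bitsum j > 0" using assms by simp
  ultimately show ?thesis
    using multiplicity_two_choose [of n j] by linarith
qed

lemma multiplicity_two_choose_pair_pos:
  assumes "0 < j" "j \<le> n"
  shows "2 * multiplicity (2::nat) (n choose j) + multiplicity 2 ((n + j) choose n) > 0"
  using even_choose_add_if_odd_choose [OF assms] by (cases "multiplicity (2::nat) (n choose j) = 0") auto

lemma multiplicity_two_a:
  assumes "a n j k \<noteq> 0"
  shows "multiplicity (2::nat) (a n j k)
    = (2 * multiplicity 2 (n choose j) + multiplicity 2 ((n + j) choose n))
    + (2 * multiplicity 2 (n choose k) + multiplicity 2 ((n + k) choose n))
    + multiplicity 2 ((j + k) choose n)"
  using assms by (simp add: a_def prime_elem_multiplicity_mult_distrib prime_elem_multiplicity_power_distrib)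

lemma a_degenerate: "{j, k} = {0, n} \<Longrightarrow> a n j k = (n + n) choose n"
  by (auto simp: a_def doubleton_eq_iff)

lemma v2_a_degenerate: "{j, k} = {0, n} \<Longrightarrow> v2 (a n j k) = enat (bitsum n)"
  by (simp add: a_degenerate v2_def multiplicity_two_central_binomial)

lemma two_le_v2_a:
  assumes "{j, k} \<noteq> {0, n}"
  shows "v2 (a n j k) \<ge> 2"
proof (cases "a n j k = 0")
  case False
  then have "j \<le> n" "k \<le> n" "n \<le> j + k"
    by (auto simp: a_def binomial_eq_0_iff not_less)
  with assms have "0 < j" "0 < k" by auto
  with \<open>j \<le> n\<close> \<open>k \<le> n\<close> have "multiplicity (2::nat) (a n j k) \<ge> 2"
    using multiplicity_two_a [OF False] multiplicity_two_choose_pair_pos [of j n]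
      multiplicity_two_choose_pair_pos [of k n] by linarith
  with False show ?thesis
    by (simp add: v2_def numeral_eq_enat)
qed (simp add: v2_def)

theorem mainTheorem1:
  fixes n j k :: nat
  assumes "n \<ge> 1"
  shows "(v2 (a n j k) = 1 \<longleftrightarrow> ({j, k} = {0, n} \<and> (\<exists>m::nat. n = 2 ^ m)))
         \<and> (\<not> ({j, k} = {0, n} \<and> (\<exists>m::nat. n = 2 ^ m)) \<longrightarrow> v2 (a n j k) \<ge> 2)"
proof (cases "{j, k} = {0, n}")
  case True
  have "bitsum n \<noteq> 0" using assms by simp
  then have "bitsum n \<noteq> 1 \<Longrightarrow> bitsum n \<ge> 2" by linarith
  then have "bitsum n \<noteq> 1 \<Longrightarrow> enat (bitsum n) \<ge> 2"
    by (simp add: numeral_eq_enat)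
  then show ?thesis
    using True v2_a_degenerate bitsum_eq_1_iff [of n] by (auto simp: one_enat_def)
next
  case False
  then have "v2 (a n j k) \<ge> 2" by (rule two_le_v2_a)
  then have "v2 (a n j k) \<noteq> 1" by (auto simp: one_enat_def numeral_eq_enat)
  with False \<open>v2 (a n j k) \<ge> 2\<close> show ?thesis by blast
qed

end
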